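(* Let $\alpha,\beta$ be real constants with $\kappa^2=4(\alpha+\beta^2)$, $\kappa>0$. Suppose $u(x,t),v(x,t)$ solve the (rescaled) system $$\begin{cases} m_t=(\partial_x m+m\partial_x)(\kappa v_x+2\beta v-u)+n\,(\kappa u_x-2\beta u-4\alpha v)_x,\\ n_t=\big[n(\kappa v_x+2\beta v-u)\big]_x,\\ m=u_{xx}-u,\qquad n=v-v_{xx}.\end{cases}$$ Define $$p=-(\kappa n_x+2\beta n+m),\qquad \rho=\kappa n,\qquad q=-\kappa v_x-2\beta v+u.$$ Then $(p,\rho,q)$ solves the two-component Camassa–Holm equation $$\begin{cases} p_t+qp_x+2pq_x-\rho\rho_x=0,\\ \rho_t+(\rho q)_x=0,\\ p=q-q_{xx}.\end{cases}$$ That is, this is a Miura-type transformation from the first system to the two-component Camassa–Holm equation.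
   Context: $(\partial_x m+m\partial_x)w$ denotes $2mw_x+m_xw$. *)

theory Defs
  imports "HOL-Analysis.Analysis"
begin

definition pdx :: "(real \<Rightarrow> real \<Rightarrow> real) \<Rightarrow> real \<Rightarrow> real \<Rightarrow> real" where
  "pdx f = (\<lambda>x t. deriv (\<lambda>y. f y t) x)"

definition pdt :: "(real \<Rightarrow> real \<Rightarrow> real) \<Rightarrow> real \<Rightarrow> real \<Rightarrow> real" where
  "pdt f = (\<lambda>x t. deriv (\<lambda>s. f x s) t)"

text \<open>Iterated partial derivative: True = d/dx, False = d/dt (applied right to left).\<close>
definition iter_pd :: "bool list \<Rightarrow> (real \<Rightarrow> real \<Rightarrow> real) \<Rightarrow> real \<Rightarrow> real \<Rightarrow> real" where
  "iter_pd ds f = foldr (\<lambda>d g. if d then pdx g else pdt g) ds f"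

definition smooth2 :: "(real \<Rightarrow> real \<Rightarrow> real) \<Rightarrow> bool" where
  "smooth2 f \<longleftrightarrow> (\<forall>ds z. (\<lambda>w. iter_pd ds f (fst w) (snd w)) differentiable (at z))"

end

theory Submission
  imports Defs
begin

text \<open>With \<open>w = \<kappa> v\<^sub>x + 2\<beta> v - u\<close> one has \<open>q = -w\<close> and \<open>\<rho> = \<kappa> n\<close>; the relation
  \<open>p = q - q\<^sub>x\<^sub>x\<close> is just \<open>w - w\<^sub>x\<^sub>x = \<kappa> n\<^sub>x + 2\<beta> n + m\<close>, and the \<open>\<rho>\<close>-equation is \<open>\<kappa>\<close> times
  \<open>n\<^sub>t = (n w)\<^sub>x\<close>. For the \<open>p\<close>-equation, symmetry of mixed partials turns \<open>n\<^sub>t = (n w)\<^sub>x\<close>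
  into \<open>n\<^sub>x\<^sub>t = (n w)\<^sub>x\<^sub>x\<close>; substituting the equations for \<open>m\<close> and \<open>n\<close>, everything cancels except
  \<open>-n (\<kappa> w\<^sub>x\<^sub>x - 2\<beta> w\<^sub>x + z\<^sub>x + \<kappa>\<^sup>2 n\<^sub>x)\<close>, and this bracket vanishes identically exactly
  because \<open>\<kappa>\<^sup>2 = 4(\<alpha> + \<beta>\<^sup>2)\<close>.\<close>

definition x_differentiable :: "(real \<Rightarrow> real \<Rightarrow> real) \<Rightarrow> bool" where
  "x_differentiable f \<longleftrightarrow> (\<forall>x t. (\<lambda>y. f y t) field_differentiable at x)"

definition t_differentiable :: "(real \<Rightarrow> real \<Rightarrow> real) \<Rightarrow> bool" where
  "t_differentiable f \<longleftrightarrow> (\<forall>x t. (\<lambda>s. f x s) field_differentiable at t)"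

lemma has_real_derivative_pdx:
  "x_differentiable f \<Longrightarrow> ((\<lambda>y. f y t) has_real_derivative pdx f x t) (at x)"
  unfolding x_differentiable_def pdx_def by (simp add: DERIV_deriv_iff_field_differentiable)

lemma has_real_derivative_pdt:
  "t_differentiable f \<Longrightarrow> ((\<lambda>s. f x s) has_real_derivative pdt f x t) (at t)"
  unfolding t_differentiable_def pdt_def by (simp add: DERIV_deriv_iff_field_differentiable)

lemma x_differentiable_mult [simp]:
  "x_differentiable f \<Longrightarrow> x_differentiable g \<Longrightarrow> x_differentiable (\<lambda>x t. f x t * g x t)"
  by (simp add: x_differentiable_def field_differentiable_mult)

lemma x_differentiable_cmult [simp]:
  "x_differentiable f \<Longrightarrow> x_differentiable (\<lambda>x t. c * f x t)"
  by (simp add: x_differentiable_def field_differentiable_mult)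

lemma x_differentiable_minus [simp]:
  "x_differentiable f \<Longrightarrow> x_differentiable (\<lambda>x t. - f x t)"
  by (simp add: x_differentiable_def field_differentiable_minus)

lemma t_differentiable_diff [simp]:
  "t_differentiable f \<Longrightarrow> t_differentiable g \<Longrightarrow> t_differentiable (\<lambda>x t. f x t - g x t)"
  by (simp add: t_differentiable_def field_differentiable_diff)

lemma t_differentiable_minus [simp]:
  "t_differentiable f \<Longrightarrow> t_differentiable (\<lambda>x t. - f x t)"
  by (simp add: t_differentiable_def field_differentiable_minus)

lemma pdx_add [simp]:
  "x_differentiable f \<Longrightarrow> x_differentiable g \<Longrightarrow>
    pdx (\<lambda>x t. f x t + g x t) = (\<lambda>x t. pdx f x t + pdx g x t)"
  by (simp add: x_differentiable_def pdx_def)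

lemma pdx_diff [simp]:
  "x_differentiable f \<Longrightarrow> x_differentiable g \<Longrightarrow>
    pdx (\<lambda>x t. f x t - g x t) = (\<lambda>x t. pdx f x t - pdx g x t)"
  by (simp add: x_differentiable_def pdx_def)

lemma pdx_mult [simp]:
  "x_differentiable f \<Longrightarrow> x_differentiable g \<Longrightarrow>
    pdx (\<lambda>x t. f x t * g x t) = (\<lambda>x t. f x t * pdx g x t + pdx f x t * g x t)"
  by (simp add: x_differentiable_def pdx_def)

lemma pdx_cmult [simp]:
  "x_differentiable f \<Longrightarrow> pdx (\<lambda>x t. c * f x t) = (\<lambda>x t. c * pdx f x t)"
  by (simp add: x_differentiable_def pdx_def deriv_cmult)

lemma pdx_minus [simp]:
  "x_differentiable f \<Longrightarrow> pdx (\<lambda>x t. - f x t) = (\<lambda>x t. - pdx f x t)"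
  by (simp add: x_differentiable_def pdx_def)

lemma pdt_add [simp]:
  "t_differentiable f \<Longrightarrow> t_differentiable g \<Longrightarrow>
    pdt (\<lambda>x t. f x t + g x t) = (\<lambda>x t. pdt f x t + pdt g x t)"
  by (simp add: t_differentiable_def pdt_def)

lemma pdt_diff [simp]:
  "t_differentiable f \<Longrightarrow> t_differentiable g \<Longrightarrow>
    pdt (\<lambda>x t. f x t - g x t) = (\<lambda>x t. pdt f x t - pdt g x t)"
  by (simp add: t_differentiable_def pdt_def)

lemma pdt_cmult [simp]:
  "t_differentiable f \<Longrightarrow> pdt (\<lambda>x t. c * f x t) = (\<lambda>x t. c * pdt f x t)"
  by (simp add: t_differentiable_def pdt_def deriv_cmult)

lemma pdt_minus [simp]:
  "t_differentiable f \<Longrightarrow> pdt (\<lambda>x t. - f x t) = (\<lambda>x t. - pdt f x t)"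
  by (simp add: t_differentiable_def pdt_def)

section \<open>Smooth functions of two variables\<close>

lemma iter_pd_Nil [simp]: "iter_pd [] f = f"
  by (simp add: iter_pd_def)

lemma iter_pd_Cons:
  "iter_pd (d # ds) f = (if d then pdx (iter_pd ds f) else pdt (iter_pd ds f))"
  by (simp add: iter_pd_def)

lemma smooth2_iter_pd: "smooth2 f \<Longrightarrow> smooth2 (iter_pd ds f)"
  unfolding smooth2_def by (simp add: iter_pd_def flip: foldr_append)

lemma smooth2_pdx [simp]: "smooth2 f \<Longrightarrow> smooth2 (pdx f)"
  using smooth2_iter_pd[of f "[True]"] by (simp add: iter_pd_Cons)

lemma smooth2_pdt [simp]: "smooth2 f \<Longrightarrow> smooth2 (pdt f)"
  using smooth2_iter_pd[of f "[False]"] by (simp add: iter_pd_Cons)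

lemma smooth2_differentiable:
  "smooth2 f \<Longrightarrow> (\<lambda>w. f (fst w) (snd w)) differentiable (at z)"
  unfolding smooth2_def by (metis iter_pd_Nil)

lemma smooth2_imp_x_differentiable [simp]: "smooth2 f \<Longrightarrow> x_differentiable f"
  unfolding x_differentiable_def
proof (intro allI)
  fix x t :: real
  assume "smooth2 f"
  have "(\<lambda>y::real. (y, t)) differentiable at x"
    by (intro differentiable_Pair differentiable_const differentiable_ident)
  from differentiable_chain_at[OF this smooth2_differentiable[OF \<open>smooth2 f\<close>]]
  show "(\<lambda>y. f y t) field_differentiable at x"
    by (simp add: o_def field_differentiable_def flip: DERIV_deriv_iff_real_differentiable)
      blast
qed

lemma smooth2_imp_t_differentiable [simp]: "smooth2 f \<Longrightarrow> t_differentiable f"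
  unfolding t_differentiable_def
proof (intro allI)
  fix x t :: real
  assume "smooth2 f"
  have "(\<lambda>s::real. (x, s)) differentiable at t"
    by (intro differentiable_Pair differentiable_const differentiable_ident)
  from differentiable_chain_at[OF this smooth2_differentiable[OF \<open>smooth2 f\<close>]]
  show "(\<lambda>s. f x s) field_differentiable at t"
    by (simp add: o_def field_differentiable_def flip: DERIV_deriv_iff_real_differentiable)
      blast
qed

lemma iter_pd_add:
  "smooth2 f \<Longrightarrow> smooth2 g \<Longrightarrow>
    iter_pd ds (\<lambda>x t. f x t + g x t) = (\<lambda>x t. iter_pd ds f x t + iter_pd ds g x t)"
  by (induction ds) (auto simp: iter_pd_Cons smooth2_iter_pd)

lemma iter_pd_diff:
  "smooth2 f \<Longrightarrow> smooth2 g \<Longrightarrow>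
    iter_pd ds (\<lambda>x t. f x t - g x t) = (\<lambda>x t. iter_pd ds f x t - iter_pd ds g x t)"
  by (induction ds) (auto simp: iter_pd_Cons smooth2_iter_pd)

lemma iter_pd_cmult:
  "smooth2 f \<Longrightarrow> iter_pd ds (\<lambda>x t. c * f x t) = (\<lambda>x t. c * iter_pd ds f x t)"
  by (induction ds) (auto simp: iter_pd_Cons smooth2_iter_pd)

lemma smooth2_add [simp]: "smooth2 f \<Longrightarrow> smooth2 g \<Longrightarrow> smooth2 (\<lambda>x t. f x t + g x t)"
  unfolding smooth2_def by (simp add: iter_pd_add smooth2_def differentiable_add)

lemma smooth2_diff [simp]: "smooth2 f \<Longrightarrow> smooth2 g \<Longrightarrow> smooth2 (\<lambda>x t. f x t - g x t)"
  unfolding smooth2_def by (simp add: iter_pd_diff smooth2_def differentiable_diff)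

lemma smooth2_cmult [simp]: "smooth2 f \<Longrightarrow> smooth2 (\<lambda>x t. c * f x t)"
  unfolding smooth2_def by (simp add: iter_pd_cmult smooth2_def differentiable_cmult_left_iff)

section \<open>Symmetry of mixed partial derivatives\<close>

lemma smooth2_continuous_box:
  assumes "smooth2 f" "e > 0"
  obtains d where "d > 0" "\<And>a b. \<bar>a - x\<bar> < d \<Longrightarrow> \<bar>b - t\<bar> < d \<Longrightarrow> \<bar>f a b - f x t\<bar> < e"
proof -
  have "isCont (\<lambda>w. f (fst w) (snd w)) (x, t)"
    using smooth2_differentiable[OF assms(1)] by (rule differentiable_imp_continuous_within)
  then obtain d where d: "d > 0"
    "\<And>w. dist w (x, t) < d \<Longrightarrow> dist (f (fst w) (snd w)) (f x t) < e"
    using assms(2) unfolding continuous_at_eps_delta by fastforce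
  show thesis
  proof (rule that[of "d / 2"])
    fix a b
    assume "\<bar>a - x\<bar> < d / 2" "\<bar>b - t\<bar> < d / 2"
    moreover have "dist (a, b) (x, t) \<le> \<bar>a - x\<bar> + \<bar>b - t\<bar>"
      using norm_Pair_le[of "a - x" "b - t"] by (simp add: dist_norm)
    ultimately show "\<bar>f a b - f x t\<bar> < e"
      using d(2)[of "(a, b)"] by (simp add: dist_real_def)
  qed (use d in simp)
qed

lemma second_difference_eq_pdt_pdx:
  assumes f: "smooth2 f" and h: "h > 0"
  obtains \<xi> \<eta> where "x < \<xi>" "\<xi> < x + h" "t < \<eta>" "\<eta> < t + h"
    "f (x + h) (t + h) - f (x + h) t - f x (t + h) + f x t = h * h * pdt (pdx f) \<xi> \<eta>"
proof -
  have "\<exists>\<xi>>x. \<xi> < x + h \<and> (f (x + h) (t + h) - f (x + h) t) - (f x (t + h) - f x t)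
          = (x + h - x) * (pdx f \<xi> (t + h) - pdx f \<xi> t)"
    using h f by (intro MVT2) (auto intro!: DERIV_diff has_real_derivative_pdx)
  then obtain \<xi> where \<xi>: "x < \<xi>" "\<xi> < x + h"
    and "(f (x + h) (t + h) - f (x + h) t) - (f x (t + h) - f x t)
         = h * (pdx f \<xi> (t + h) - pdx f \<xi> t)"
    by auto
  moreover have "\<exists>\<eta>>t. \<eta> < t + h \<and> pdx f \<xi> (t + h) - pdx f \<xi> t = (t + h - t) * pdt (pdx f) \<xi> \<eta>"
    using h f by (intro MVT2) (auto intro!: has_real_derivative_pdt)
  then obtain \<eta> where \<eta>: "t < \<eta>" "\<eta> < t + h"
    and "pdx f \<xi> (t + h) - pdx f \<xi> t = h * pdt (pdx f) \<xi> \<eta>"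
    by auto
  ultimately show thesis
    using that[OF \<xi> \<eta>] by (simp add: algebra_simps)
qed

lemma second_difference_eq_pdx_pdt:
  assumes f: "smooth2 f" and h: "h > 0"
  obtains \<xi> \<eta> where "x < \<xi>" "\<xi> < x + h" "t < \<eta>" "\<eta> < t + h"
    "f (x + h) (t + h) - f (x + h) t - f x (t + h) + f x t = h * h * pdx (pdt f) \<xi> \<eta>"
proof -
  have "\<exists>\<eta>>t. \<eta> < t + h \<and> (f (x + h) (t + h) - f x (t + h)) - (f (x + h) t - f x t)
          = (t + h - t) * (pdt f (x + h) \<eta> - pdt f x \<eta>)"
    using h f by (intro MVT2) (auto intro!: DERIV_diff has_real_derivative_pdt)
  then obtain \<eta> where \<eta>: "t < \<eta>" "\<eta> < t + h"
    and "(f (x + h) (t + h) - f x (t + h)) - (f (x + h) t - f x t)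
         = h * (pdt f (x + h) \<eta> - pdt f x \<eta>)"
    by auto
  moreover have "\<exists>\<xi>>x. \<xi> < x + h \<and> pdt f (x + h) \<eta> - pdt f x \<eta> = (x + h - x) * pdx (pdt f) \<xi> \<eta>"
    using h f by (intro MVT2) (auto intro!: has_real_derivative_pdx)
  then obtain \<xi> where \<xi>: "x < \<xi>" "\<xi> < x + h"
    and "pdt f (x + h) \<eta> - pdt f x \<eta> = h * pdx (pdt f) \<xi> \<eta>"
    by auto
  ultimately show thesis
    using that[OF \<xi> \<eta>] by (simp add: algebra_simps)
qed

lemma pdt_pdx_eq_pdx_pdt:
  assumes f: "smooth2 f"
  shows "pdt (pdx f) x t = pdx (pdt f) x t"
proof -
  let ?A = "pdt (pdx f)" and ?B = "pdx (pdt f)"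
  have close: "\<bar>?A x t - ?B x t\<bar> < 2 * e" if "e > 0" for e
  proof -
    obtain d1 where d1: "d1 > 0" "\<And>a b. \<bar>a - x\<bar> < d1 \<Longrightarrow> \<bar>b - t\<bar> < d1 \<Longrightarrow> \<bar>?A a b - ?A x t\<bar> < e"
      using smooth2_continuous_box[of ?A e] f \<open>e > 0\<close> by auto
    obtain d2 where d2: "d2 > 0" "\<And>a b. \<bar>a - x\<bar> < d2 \<Longrightarrow> \<bar>b - t\<bar> < d2 \<Longrightarrow> \<bar>?B a b - ?B x t\<bar> < e"
      using smooth2_continuous_box[of ?B e] f \<open>e > 0\<close> by auto
    define h where "h = min d1 d2"
    have h: "h > 0" using d1 d2 by (simp add: h_def)
    obtain \<xi> \<eta> where \<xi>\<eta>: "x < \<xi>" "\<xi> < x + h" "t < \<eta>" "\<eta> < t + h"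
      and A: "f (x + h) (t + h) - f (x + h) t - f x (t + h) + f x t = h * h * ?A \<xi> \<eta>"
      using second_difference_eq_pdt_pdx[OF f h] by blast
    obtain \<xi>' \<eta>' where \<xi>'\<eta>': "x < \<xi>'" "\<xi>' < x + h" "t < \<eta>'" "\<eta>' < t + h"
      and B: "f (x + h) (t + h) - f (x + h) t - f x (t + h) + f x t = h * h * ?B \<xi>' \<eta>'"
      using second_difference_eq_pdx_pdt[OF f h] by blast
    have "?A \<xi> \<eta> = ?B \<xi>' \<eta>'"
      using A B h by simp
    moreover have "\<bar>?A \<xi> \<eta> - ?A x t\<bar> < e"
      using d1(2) \<xi>\<eta> unfolding h_def by simp
    moreover have "\<bar>?B \<xi>' \<eta>' - ?B x t\<bar> < e"
      using d2(2) \<xi>'\<eta>' unfolding h_def by simp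
    ultimately show ?thesis by linarith
  qed
  show ?thesis
    using close[of "\<bar>?A x t - ?B x t\<bar> / 2"] by fastforce
qed

section \<open>The Miura-type transformation\<close>

lemma two_component_CH_momentum_residual:
  fixes \<kappa> \<beta> :: real and m n w z :: "real \<Rightarrow> real \<Rightarrow> real"
  assumes sm: "smooth2 m" and sn: "smooth2 n" and sw: "smooth2 w"
    and m_t: "\<And>x t. pdt m x t = 2 * m x t * pdx w x t + pdx m x t * w x t + n x t * pdx z x t"
    and n_t: "\<And>x t. pdt n x t = pdx (\<lambda>x t. n x t * w x t) x t"
  defines "p \<equiv> \<lambda>x t. - (\<kappa> * pdx n x t + 2 * \<beta> * n x t + m x t)"
  shows "pdt p x t - w x t * pdx p x t - 2 * p x t * pdx w x t
       = - n x t * (\<kappa> * pdx (pdx w) x t - 2 * \<beta> * pdx w x t + pdx z x t)"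
proof -
  have "pdt (pdx n) x t = pdx (pdt n) x t"
    using sn by (rule pdt_pdx_eq_pdx_pdt)
  also have "pdt n = pdx (\<lambda>x t. n x t * w x t)"
    using n_t by blast
  finally have n_xt: "pdt (pdx n) x t = pdx (pdx (\<lambda>x t. n x t * w x t)) x t" .
  have "pdt p x t = - (\<kappa> * pdt (pdx n) x t + 2 * \<beta> * pdt n x t + pdt m x t)"
    unfolding p_def using sm sn by simp
  then show ?thesis
    unfolding n_xt n_t m_t unfolding p_def using sm sn sw by simp (simp add: algebra_simps)
qed

lemma miura_compatibility:
  fixes \<alpha> \<beta> \<kappa> :: real and u v :: "real \<Rightarrow> real \<Rightarrow> real"
  assumes kappa_sq: "\<kappa>\<^sup>2 = 4 * (\<alpha> + \<beta>\<^sup>2)"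
    and su: "smooth2 u" and sv: "smooth2 v"
  defines "w \<equiv> \<lambda>x t. \<kappa> * pdx v x t + 2 * \<beta> * v x t - u x t"
    and "z \<equiv> \<lambda>x t. \<kappa> * pdx u x t - 2 * \<beta> * u x t - 4 * \<alpha> * v x t"
    and "n \<equiv> \<lambda>x t. v x t - pdx (pdx v) x t"
  shows "\<kappa> * pdx (pdx w) x t - 2 * \<beta> * pdx w x t + pdx z x t = - \<kappa>\<^sup>2 * pdx n x t"
  unfolding w_def z_def n_def using su sv by simp (use kappa_sq in algebra)

theorem proposition2:
  fixes \<alpha> \<beta> \<kappa> :: real and u v :: "real \<Rightarrow> real \<Rightarrow> real"
  assumes kappa_sq: "\<kappa>\<^sup>2 = 4 * (\<alpha> + \<beta>\<^sup>2)"
    and kappa_pos: "\<kappa> > 0"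
    and smooth_u: "smooth2 u" and smooth_v: "smooth2 v"
  defines "m \<equiv> \<lambda>x t. pdx (pdx u) x t - u x t"
    and "n \<equiv> \<lambda>x t. v x t - pdx (pdx v) x t"
    and "w \<equiv> \<lambda>x t. \<kappa> * pdx v x t + 2 * \<beta> * v x t - u x t"
    and "z \<equiv> \<lambda>x t. \<kappa> * pdx u x t - 2 * \<beta> * u x t - 4 * \<alpha> * v x t"
  assumes eq_m: "\<And>x t. pdt m x t = 2 * m x t * pdx w x t + pdx m x t * w x t + n x t * pdx z x t"
    and eq_n: "\<And>x t. pdt n x t = pdx (\<lambda>x t. n x t * w x t) x t"
  defines "p \<equiv> \<lambda>x t. - (\<kappa> * pdx n x t + 2 * \<beta> * n x t + m x t)"
    and "\<rho> \<equiv> \<lambda>x t. \<kappa> * n x t"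
    and "q \<equiv> \<lambda>x t. - \<kappa> * pdx v x t - 2 * \<beta> * v x t + u x t"
  shows "(\<forall>x t. pdt p x t + q x t * pdx p x t + 2 * p x t * pdx q x t - \<rho> x t * pdx \<rho> x t = 0)
       \<and> (\<forall>x t. pdt \<rho> x t + pdx (\<lambda>x t. \<rho> x t * q x t) x t = 0)
       \<and> (\<forall>x t. p x t = q x t - pdx (pdx q) x t)"
proof (intro conjI allI)
  have sm: "smooth2 m" and sn: "smooth2 n" and sw: "smooth2 w"
    unfolding m_def n_def w_def using smooth_u smooth_v by simp_all
  have q_w: "q = (\<lambda>x t. - w x t)"
    unfolding q_def w_def by (intro ext) simp
  fix x t
  have "pdt p x t - w x t * pdx p x t - 2 * p x t * pdx w x t
      = - n x t * (\<kappa> * pdx (pdx w) x t - 2 * \<beta> * pdx w x t + pdx z x t)"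
    unfolding p_def by (rule two_component_CH_momentum_residual[OF sm sn sw eq_m eq_n])
  also have "\<kappa> * pdx (pdx w) x t - 2 * \<beta> * pdx w x t + pdx z x t = - \<kappa>\<^sup>2 * pdx n x t"
    unfolding w_def z_def n_def by (rule miura_compatibility[OF kappa_sq smooth_u smooth_v])
  finally show "pdt p x t + q x t * pdx p x t + 2 * p x t * pdx q x t - \<rho> x t * pdx \<rho> x t = 0"
    unfolding q_w \<rho>_def using sn sw by (simp add: power2_eq_square algebra_simps)
  show "pdt \<rho> x t + pdx (\<lambda>x t. \<rho> x t * q x t) x t = 0"
    unfolding q_w \<rho>_def using sn sw eq_n by (simp add: algebra_simps)
  show "p x t = q x t - pdx (pdx q) x t"
    unfolding p_def q_def n_def m_def using smooth_u smooth_v by (simp add: algebra_simps)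
qed

end
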